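(* Let $\bar F^a,\bar F^b:\mathbb{R}^n\times\mathbb{R}^q\times\mathbb{R}_{>0}\to\mathbb{R}^n$ be closed-loop discrete-time models. If the pair $(\bar F^a,\bar F^b)$ is REPC, then $\bar F^a$ is REPMC with $\bar F^b$ (the pair is REPMC).
   Context: $\mathcal{K}_\infty$: continuous, strictly increasing, unbounded functions $\mathbb{R}_{\ge0}\to\mathbb{R}_{\ge0}$ vanishing at $0$. REPC: the pair $(\bar F^a,\bar F^b)$ is REPC if there exists $\phi\in\mathcal{K}_\infty$ such that for each $M,E\ge0$ there exist constants $K>0$, $T^*>0$ and $\rho\in\mathcal{K}_\infty$ with $|\bar F^a(x^a,e,T)-\bar F^b(x^b,e,T)|\le(1+KT)|x^a-x^b|+T\rho(T)(\max\{|x^a|,|x^b|\}+\phi(|e|))$ for all $|x^a|,|x^b|\le M$, $|e|\le E$, $T\in(0,T^* )$. REPMC: $\bar F^a$ is REPMC with $\bar F^b$ if there exists $\phi\in\mathcal{K}_\infty$ such that for each $M,E\ge0$ and $\mathcal{T},\eta>0$ there exist $T^*=T^*(M,E,\mathcal{T},\eta)>0$ and $\alpha:\mathbb{R}_{\ge0}\times\mathbb{R}_{\ge0}\to\mathbb{R}_{\ge0}\cup\{\infty\}$ with $\alpha(\cdot,T)$ nondecreasing for all $T\in[0,T^* )$ such that: $|x^a-x^b|\le\delta$ implies $|\bar F^a(x^a,e,T)-\bar F^b(x^b,e,T)|\le\alpha(\delta,T)$ for all $|x^a|,|x^b|\le M$, $|e|\le E$, $T\in(0,T^* )$; and for every sequence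 $T_0,T_1,\dots$ in $(0,T^* )$ and $k$ with $\sum_{i=0}^{k-1}T_i\le\mathcal{T}$, $\alpha^k(0,\{T_i\}):=\alpha(\cdots\alpha(\alpha(0,T_0),T_1)\cdots,T_{k-1})\le\eta M+\phi(E)$. *)

theory Defs
  imports "HOL-Analysis.Analysis" "HOL-Library.Extended_Real"
begin

definition Kinf :: "(real \<Rightarrow> real) \<Rightarrow> bool" where
  "Kinf f \<longleftrightarrow> continuous_on {0..} f \<and> strict_mono_on {0..} f \<and> f 0 = 0
     \<and> (\<forall>x\<ge>0. f x \<ge> 0) \<and> (\<forall>B. \<exists>x\<ge>0. f x > B)"

type_synonym ('n,'q) cl_model = "real^'n \<Rightarrow> real^'q \<Rightarrow> real \<Rightarrow> real^'n"

definition REPC :: "('n::finite,'q::finite) cl_model \<Rightarrow> ('n,'q) cl_model \<Rightarrow> bool" where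
  "REPC Fa Fb \<longleftrightarrow> (\<exists>\<phi>. Kinf \<phi> \<and>
     (\<forall>M E. M \<ge> 0 \<longrightarrow> E \<ge> 0 \<longrightarrow>
       (\<exists>K>0. \<exists>Tstar>0. \<exists>\<rho>. Kinf \<rho> \<and>
         (\<forall>xa xb e T. norm xa \<le> M \<longrightarrow> norm xb \<le> M \<longrightarrow> norm e \<le> E \<longrightarrow>
            0 < T \<longrightarrow> T < Tstar \<longrightarrow>
            norm (Fa xa e T - Fb xb e T)
              \<le> (1 + K * T) * norm (xa - xb)
                 + T * \<rho> T * (max (norm xa) (norm xb) + \<phi> (norm e))))))"

fun alpha_iter :: "(real \<Rightarrow> real \<Rightarrow> ereal) \<Rightarrow> (nat \<Rightarrow> real) \<Rightarrow> nat \<Rightarrow> ereal" where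
  "alpha_iter \<alpha> Ts 0 = 0"
| "alpha_iter \<alpha> Ts (Suc k) =
     (case alpha_iter \<alpha> Ts k of ereal r \<Rightarrow> \<alpha> r (Ts k) | _ \<Rightarrow> \<infinity>)"

definition REPMC :: "('n::finite,'q::finite) cl_model \<Rightarrow> ('n,'q) cl_model \<Rightarrow> bool" where
  "REPMC Fa Fb \<longleftrightarrow> (\<exists>\<phi>. Kinf \<phi> \<and>
     (\<forall>M E \<T> \<eta>. M \<ge> 0 \<longrightarrow> E \<ge> 0 \<longrightarrow> \<T> > 0 \<longrightarrow> \<eta> > 0 \<longrightarrow>
       (\<exists>Tstar>0. \<exists>\<alpha>::real \<Rightarrow> real \<Rightarrow> ereal.
          (\<forall>d T. 0 \<le> d \<longrightarrow> 0 \<le> T \<longrightarrow> \<alpha> d T \<ge> 0) \<and>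
          (\<forall>T. 0 \<le> T \<longrightarrow> T < Tstar \<longrightarrow> mono_on {0..} (\<lambda>d. \<alpha> d T)) \<and>
          (\<forall>xa xb e T d. 0 \<le> d \<longrightarrow> norm (xa - xb) \<le> d \<longrightarrow>
             norm xa \<le> M \<longrightarrow> norm xb \<le> M \<longrightarrow> norm e \<le> E \<longrightarrow>
             0 < T \<longrightarrow> T < Tstar \<longrightarrow>
             ereal (norm (Fa xa e T - Fb xb e T)) \<le> \<alpha> d T) \<and>
          (\<forall>Ts k. (\<forall>i. 0 < Ts i \<and> Ts i < Tstar) \<longrightarrow> (\<Sum>i<k. Ts i) \<le> \<T> \<longrightarrow>
             alpha_iter \<alpha> Ts k \<le> ereal (\<eta> * M + \<phi> E)))))"

end

theory Submission
  imports Defs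
begin

text \<open>Take the REPC estimate itself as the gain:
  \<open>\<alpha>(d, T) = (1 + K T) d + T \<rho>(T) (M + \<phi>(E))\<close>.
  Iterating an affine map of this shape is a discrete Gronwall inequality: after steps of total
  length \<open>S \<le> \<T>\<close> the iterate is at most \<open>e\<^sup>K\<^sup>S S sup \<rho> (M + \<phi>(E))\<close>. Since \<open>\<rho>\<close> is continuous
  with \<open>\<rho>(0) = 0\<close>, shrinking the admissible sampling periods makes \<open>sup \<rho>\<close> as small as we
  like, and the bound drops below \<open>\<eta> M + \<phi>(E)\<close>.\<close>

lemma Kinf_mono: "Kinf \<phi> \<Longrightarrow> 0 \<le> a \<Longrightarrow> a \<le> b \<Longrightarrow> \<phi> a \<le> \<phi> b"
  by (rule strict_mono_on_leD[of "{0..}"]) (auto simp: Kinf_def)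

lemma Kinf_nonneg: "Kinf \<phi> \<Longrightarrow> 0 \<le> a \<Longrightarrow> 0 \<le> \<phi> a"
  by (simp add: Kinf_def)

lemma Kinf_small_near_0:
  assumes "Kinf \<rho>" and "0 < \<epsilon>"
  obtains \<delta> where "0 < \<delta>" and "\<And>t. 0 \<le> t \<Longrightarrow> t < \<delta> \<Longrightarrow> \<rho> t \<le> \<epsilon>"
proof -
  have "continuous_on {0..} \<rho>" and "\<rho> 0 = 0"
    using assms(1) by (simp_all add: Kinf_def)
  then obtain \<delta> where "0 < \<delta>"
    and "\<forall>t\<in>{0..}. dist t 0 < \<delta> \<longrightarrow> dist (\<rho> t) (\<rho> 0) < \<epsilon>"
    using assms(2) unfolding continuous_on_iff by (metis atLeast_iff order_refl)
  then show thesis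
    using \<open>\<rho> 0 = 0\<close> by (intro that[of \<delta>]) (auto simp: dist_real_def)
qed

lemma discrete_gronwall_step:
  fixes K S t a b B :: real
  assumes "0 \<le> K" "0 \<le> S" "0 \<le> t" "0 \<le> B"
    and "a \<le> exp (K * S) * S * B" and "b \<le> B"
  shows "(1 + K * t) * a + t * b \<le> exp (K * (S + t)) * (S + t) * B"
proof -
  have "(1 + K * t) * a \<le> (1 + K * t) * (exp (K * S) * S * B)"
    using assms by (intro mult_left_mono) auto
  also have "\<dots> \<le> exp (K * t) * (exp (K * S) * S * B)"
    using assms by (intro mult_right_mono exp_ge_add_one_self) auto
  also have "\<dots> = exp (K * (S + t)) * S * B"
    by (simp add: distrib_left mult_exp_exp)
  finally have first: "(1 + K * t) * a \<le> exp (K * (S + t)) * S * B" .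
  have "t * b \<le> t * B"
    using assms by (intro mult_left_mono) auto
  also have "\<dots> \<le> exp (K * (S + t)) * (t * B)"
    using assms mult_right_mono[of 1 "exp (K * (S + t))" "t * B"] by simp
  finally show ?thesis
    using first by (simp add: algebra_simps)
qed

lemma alpha_iter_affine_le:
  fixes K B :: real
  assumes "0 \<le> K" "0 \<le> B" and Ts: "\<And>i. 0 \<le> Ts i \<and> b (Ts i) \<le> B"
  shows "alpha_iter (\<lambda>d T. ereal ((1 + K * T) * d + T * b T)) Ts k
           \<le> ereal (exp (K * (\<Sum>i<k. Ts i)) * (\<Sum>i<k. Ts i) * B)"
proof -
  let ?\<alpha> = "\<lambda>d T. ereal ((1 + K * T) * d + T * b T)"
  have "\<exists>a. alpha_iter ?\<alpha> Ts k = ereal a \<and> a \<le> exp (K * (\<Sum>i<k. Ts i)) * (\<Sum>i<k. Ts i) * B"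
  proof (induction k)
    case 0
    then show ?case by (simp add: zero_ereal_def)
  next
    case (Suc k)
    then obtain a where "alpha_iter ?\<alpha> Ts k = ereal a"
      and "a \<le> exp (K * (\<Sum>i<k. Ts i)) * (\<Sum>i<k. Ts i) * B"
      by blast
    moreover have "0 \<le> (\<Sum>i<k. Ts i)"
      using Ts by (simp add: sum_nonneg)
    ultimately show ?case
      using assms discrete_gronwall_step by simp
  qed
  then show ?thesis by auto
qed

lemma REPC_estimate_le:
  fixes xa xb :: "'a::real_normed_vector" and e :: "'b::real_normed_vector"
  assumes "Kinf \<phi>" "0 \<le> K" "0 \<le> T" "0 \<le> r"
    and "norm (xa - xb) \<le> d" "norm xa \<le> M" "norm xb \<le> M" "norm e \<le> E"
  shows "(1 + K * T) * norm (xa - xb) + T * r * (max (norm xa) (norm xb) + \<phi> (norm e))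
           \<le> (1 + K * T) * d + T * (r * (M + \<phi> E))"
proof -
  have "max (norm xa) (norm xb) + \<phi> (norm e) \<le> M + \<phi> E"
    using assms Kinf_mono[of \<phi> "norm e" E] by simp
  then have "T * r * (max (norm xa) (norm xb) + \<phi> (norm e)) \<le> T * r * (M + \<phi> E)"
    using assms by (intro mult_left_mono) auto
  moreover have "(1 + K * T) * norm (xa - xb) \<le> (1 + K * T) * d"
    using assms by (intro mult_left_mono) auto
  ultimately show ?thesis
    by (simp add: mult.assoc)
qed

lemma min_1_mult_add_le:
  fixes \<eta> M P :: real
  assumes "0 < \<eta>" "0 \<le> M" "0 \<le> P"
  shows "min \<eta> 1 * (M + P) \<le> \<eta> * M + P"
proof -
  have "min \<eta> 1 * M \<le> \<eta> * M" and "min \<eta> 1 * P \<le> P"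
    using assms by (auto intro: mult_right_mono mult_left_le_one_le)
  then show ?thesis by (simp add: distrib_left)
qed

definition REPC_estimate ::
    "('n::finite,'q::finite) cl_model \<Rightarrow> ('n,'q) cl_model \<Rightarrow> (real \<Rightarrow> real)
      \<Rightarrow> real \<Rightarrow> real \<Rightarrow> real \<Rightarrow> real \<Rightarrow> (real \<Rightarrow> real) \<Rightarrow> bool" where
  "REPC_estimate Fa Fb \<phi> M E K Tstar \<rho> \<longleftrightarrow>
     (\<forall>xa xb e T. norm xa \<le> M \<longrightarrow> norm xb \<le> M \<longrightarrow> norm e \<le> E \<longrightarrow>
        0 < T \<longrightarrow> T < Tstar \<longrightarrow>
        norm (Fa xa e T - Fb xb e T)
          \<le> (1 + K * T) * norm (xa - xb)
             + T * \<rho> T * (max (norm xa) (norm xb) + \<phi> (norm e)))"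

definition REPMC_gain ::
    "('n::finite,'q::finite) cl_model \<Rightarrow> ('n,'q) cl_model \<Rightarrow> (real \<Rightarrow> real)
      \<Rightarrow> real \<Rightarrow> real \<Rightarrow> real \<Rightarrow> real \<Rightarrow> bool" where
  "REPMC_gain Fa Fb \<phi> M E \<T> \<eta> \<longleftrightarrow>
     (\<exists>Tstar>0. \<exists>\<alpha>::real \<Rightarrow> real \<Rightarrow> ereal.
        (\<forall>d T. 0 \<le> d \<longrightarrow> 0 \<le> T \<longrightarrow> \<alpha> d T \<ge> 0) \<and>
        (\<forall>T. 0 \<le> T \<longrightarrow> T < Tstar \<longrightarrow> mono_on {0..} (\<lambda>d. \<alpha> d T)) \<and>
        (\<forall>xa xb e T d. 0 \<le> d \<longrightarrow> norm (xa - xb) \<le> d \<longrightarrow>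
           norm xa \<le> M \<longrightarrow> norm xb \<le> M \<longrightarrow> norm e \<le> E \<longrightarrow>
           0 < T \<longrightarrow> T < Tstar \<longrightarrow>
           ereal (norm (Fa xa e T - Fb xb e T)) \<le> \<alpha> d T) \<and>
        (\<forall>Ts k. (\<forall>i. 0 < Ts i \<and> Ts i < Tstar) \<longrightarrow> (\<Sum>i<k. Ts i) \<le> \<T> \<longrightarrow>
           alpha_iter \<alpha> Ts k \<le> ereal (\<eta> * M + \<phi> E)))"

lemma REPC_iff_estimate:
  "REPC Fa Fb \<longleftrightarrow> (\<exists>\<phi>. Kinf \<phi> \<and> (\<forall>M E. M \<ge> 0 \<longrightarrow> E \<ge> 0 \<longrightarrow>
     (\<exists>K>0. \<exists>Tstar>0. \<exists>\<rho>. Kinf \<rho> \<and> REPC_estimate Fa Fb \<phi> M E K Tstar \<rho>)))"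
  unfolding REPC_def REPC_estimate_def ..

lemma REPMC_iff_gain:
  "REPMC Fa Fb \<longleftrightarrow> (\<exists>\<phi>. Kinf \<phi> \<and> (\<forall>M E \<T> \<eta>. M \<ge> 0 \<longrightarrow> E \<ge> 0 \<longrightarrow> \<T> > 0 \<longrightarrow> \<eta> > 0 \<longrightarrow>
     REPMC_gain Fa Fb \<phi> M E \<T> \<eta>))"
  unfolding REPMC_def REPMC_gain_def ..

lemma REPMC_gain_if_REPC_estimate:
  assumes \<phi>: "Kinf \<phi>"
    and M: "0 \<le> M" and E: "0 \<le> E" and \<T>: "0 < \<T>" and \<eta>: "0 < \<eta>"
    and K: "0 < K" and T0: "0 < T0" and \<rho>: "Kinf \<rho>"
    and estimate: "REPC_estimate Fa Fb \<phi> M E K T0 \<rho>"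
  shows "REPMC_gain Fa Fb \<phi> M E \<T> \<eta>"
proof -
  define C where "C = M + \<phi> E"
  define \<epsilon> where "\<epsilon> = min \<eta> 1 / (exp (K * \<T>) * \<T>)"
  have C: "0 \<le> C" and \<epsilon>: "0 < \<epsilon>"
    using M E \<T> \<eta> Kinf_nonneg[OF \<phi>] by (simp_all add: C_def \<epsilon>_def)
  obtain \<delta> where "0 < \<delta>" and \<delta>: "\<And>t. 0 \<le> t \<Longrightarrow> t < \<delta> \<Longrightarrow> \<rho> t \<le> \<epsilon>"
    using Kinf_small_near_0[OF \<rho> \<epsilon>] by blast
  define Tstar where "Tstar = min T0 \<delta>"
  define \<alpha> where "\<alpha> = (\<lambda>d T. ereal ((1 + K * T) * d + T * (\<rho> T * C)))"
  have \<rho>_Tstar: "0 \<le> \<rho> t \<and> \<rho> t \<le> \<epsilon>" if "0 \<le> t" "t < Tstar" for t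
    using that \<delta> Kinf_nonneg[OF \<rho>] by (simp add: Tstar_def)
  have iterate: "alpha_iter \<alpha> Ts k \<le> ereal (\<eta> * M + \<phi> E)"
    if Ts: "\<forall>i. 0 < Ts i \<and> Ts i < Tstar" and total: "(\<Sum>i<k. Ts i) \<le> \<T>" for Ts k
  proof -
    let ?S = "\<Sum>i<k. Ts i"
    have "0 \<le> ?S"
      using Ts by (simp add: less_imp_le sum_nonneg)
    have "alpha_iter \<alpha> Ts k \<le> ereal (exp (K * ?S) * ?S * (\<epsilon> * C))"
      unfolding \<alpha>_def using K C \<epsilon> Ts \<rho>_Tstar
      by (intro alpha_iter_affine_le) (auto intro: mult_right_mono less_imp_le)
    also have "exp (K * ?S) * ?S * (\<epsilon> * C) \<le> exp (K * \<T>) * \<T> * (\<epsilon> * C)"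
      using \<open>0 \<le> ?S\<close> total K C \<epsilon> by (intro mult_right_mono mult_mono) auto
    also have "exp (K * \<T>) * \<T> * (\<epsilon> * C) = min \<eta> 1 * (M + \<phi> E)"
      using \<T> by (simp add: \<epsilon>_def C_def)
    also have "\<dots> \<le> \<eta> * M + \<phi> E"
      using \<eta> M Kinf_nonneg[OF \<phi> E] by (rule min_1_mult_add_le)
    finally show ?thesis by simp
  qed
  show ?thesis
    unfolding REPMC_gain_def
  proof (intro exI[of _ Tstar] exI[of _ \<alpha>] conjI allI impI)
    show "0 < Tstar"
      using T0 \<open>0 < \<delta>\<close> by (simp add: Tstar_def)
    show "0 \<le> \<alpha> d T" if "0 \<le> d" "0 \<le> T" for d T
      using that K C Kinf_nonneg[OF \<rho>] by (simp add: \<alpha>_def)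
    show "mono_on {0..} (\<lambda>d. \<alpha> d T)" if "0 \<le> T" for T
      using that K by (intro mono_onI) (simp add: \<alpha>_def mult_left_mono)
    show "ereal (norm (Fa xa e T - Fb xb e T)) \<le> \<alpha> d T"
      if "norm (xa - xb) \<le> d" "norm xa \<le> M" "norm xb \<le> M" "norm e \<le> E" "0 < T" "T < Tstar"
      for xa xb e T d
      using that estimate[unfolded REPC_estimate_def, rule_format, of xa xb e T]
        K \<phi> Kinf_nonneg[OF \<rho>, of T] REPC_estimate_le[of \<phi> K T "\<rho> T" xa xb d M e E]
      by (simp add: \<alpha>_def Tstar_def C_def)
  qed (use iterate in blast)
qed

theorem lemma2:
  fixes Fa Fb :: "real^'n \<Rightarrow> real^'q \<Rightarrow> real \<Rightarrow> real^'n"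
  assumes "REPC Fa Fb"
  shows "REPMC Fa Fb"
proof -
  from assms obtain \<phi> where \<phi>: "Kinf \<phi>" and repc: "\<And>M E. 0 \<le> M \<Longrightarrow> 0 \<le> E \<Longrightarrow>
      \<exists>K>0. \<exists>T0>0. \<exists>\<rho>. Kinf \<rho> \<and> REPC_estimate Fa Fb \<phi> M E K T0 \<rho>"
    unfolding REPC_iff_estimate by blast
  have "REPMC_gain Fa Fb \<phi> M E \<T> \<eta>" if "0 \<le> M" "0 \<le> E" "0 < \<T>" "0 < \<eta>" for M E \<T> \<eta>
    using repc[OF that(1,2)] REPMC_gain_if_REPC_estimate[OF \<phi> that] by blast
  with \<phi> show ?thesis
    unfolding REPMC_iff_gain by blast
qed

end
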